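(* Let $b,n\in\mathbb N$ with $b\ge 2$. Let $m$ be a natural number that is antipalindromic in base $b^n$, with base-$b^n$ expansion $(m)_{b^n}=u_k\dots u_1u_0$ (so $u_j\in\{0,\dots,b^n-1\}$ and $m=\sum_{j=0}^k u_j b^{nj}$), and assume $u_k\ge b^{n-1}$. Then $m$ is also antipalindromic in base $b$ if and only if, for every $j\in\{0,1,\dots,k\}$, the base-$b$ expansion of $u_j$ padded with leading zeros to length exactly $n$ (i.e., the string $v_{j,n-1}\dots v_{j,1}v_{j,0}$ with $v_{j,i}\in\{0,\dots,b-1\}$ and $u_j=\sum_{i=0}^{n-1}v_{j,i}b^i$) is a palindrome, i.e., $v_{j,i}=v_{j,n-1-i}$ for all $i\in\{0,\dots,n-1\}$.
   Context: For an integer $B\ge 2$, every natural number $x$ has a unique base-$B$ expansion $x=a_\ell B^\ell+\dots+a_1B+a_0$ with $a_0,\dots,a_\ell\in\{0,1,\dots,B-1\}$ and $a_\ell\neq 0$, written $(x)_B=a_\ell\dots a_1a_0$. The number $x$ is antipalindromic in base $B$ if $a_j=B-1-a_{\ell-j}$ for all $j\in\{0,1,\dots,\ell\}$. A string $w_{n-1}\dots w_0$ is a palindrome if $w_i=w_{n-1-i}$ for all $i$. *)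

theory Defs
  imports Main
begin

text \<open>Base-B digits of x, least significant first; the list has no trailing
  (i.e. leading) zero, so its last element is the nonzero leading digit.
  For x = 0 (or B < 2) the list is empty.\<close>
function digits :: "nat \<Rightarrow> nat \<Rightarrow> nat list" where
  "digits B x = (if B < 2 \<or> x = 0 then [] else x mod B # digits B (x div B))"
  by auto
termination by (relation "measure (\<lambda>(B, x). x)") auto

declare digits.simps[simp del]

definition antipalindromic :: "nat \<Rightarrow> nat \<Rightarrow> bool" where
  "antipalindromic B x \<longleftrightarrow> x > 0 \<and>
     (let ds = digits B x; l = length ds
      in \<forall>j<l. ds ! j = B - 1 - ds ! (l - 1 - j))"

definition padded_digits :: "nat \<Rightarrow> nat \<Rightarrow> nat \<Rightarrow> nat list" where
  "padded_digits B n x = map (\<lambda>i. x div B ^ i mod B) [0..<n]"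

definition palindrome :: "'a list \<Rightarrow> bool" where
  "palindrome w \<longleftrightarrow> (\<forall>i<length w. w ! i = w ! (length w - 1 - i))"

end

(* Group the base-b digits of m into blocks of n: digit i of block j is digit i of u_j, and the
   hypothesis on u_k says that the base-b expansion of m has exactly n(k+1) digits. Base-b
   antipalindromy therefore pairs digit i of u_j with digit n-1-i of u_(k-j). On the other hand
   u_j = b^n - 1 - u_(k-j) subtracts without borrows, so digit i of u_j is b - 1 minus digit i of
   u_(k-j). Combining both, base-b antipalindromy says exactly that digit i of u_(k-j) equals its
   digit n-1-i, i.e. that every block is a palindrome. *)

theory Submission
  imports Defs
begin

definition digit :: "nat \<Rightarrow> nat \<Rightarrow> nat \<Rightarrow> nat" where
  "digit B x p = x div B ^ p mod B"

lemma digits_0 [simp]: "digits B 0 = []"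
  by (simp add: digits.simps)

lemma digits_Cons: "2 \<le> B \<Longrightarrow> 0 < x \<Longrightarrow> digits B x = x mod B # digits B (x div B)"
  by (simp add: digits.simps)

lemma length_digits_le_iff: "2 \<le> B \<Longrightarrow> length (digits B x) \<le> L \<longleftrightarrow> x < B ^ L"
proof (induction L arbitrary: x)
  case 0
  then show ?case by (cases "x = 0") (simp_all add: digits_Cons)
next
  case (Suc L)
  then show ?case
    by (cases "x = 0") (simp_all add: digits_Cons div_less_iff_less_mult mult.commute)
qed

lemma length_digits_eq:
  assumes "2 \<le> B" "0 < L" "B ^ (L - 1) \<le> x" "x < B ^ L"
  shows "length (digits B x) = L"
proof -
  have "length (digits B x) \<le> L" "\<not> length (digits B x) \<le> L - 1"
    using assms length_digits_le_iff[of B x] by auto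
  then show ?thesis by linarith
qed

lemma nth_digits: "p < length (digits B x) \<Longrightarrow> digits B x ! p = digit B x p"
proof (induction p arbitrary: x)
  case 0
  then show ?case by (subst (asm) digits.simps) (auto simp: digit_def digits.simps)
next
  case (Suc p)
  then have "digits B x = x mod B # digits B (x div B)"
    by (subst (asm) digits.simps) (auto simp: digits.simps split: if_splits)
  with Suc show ?case by (simp add: digit_def div_mult2_eq)
qed

lemma power_mult_digit_le: "B ^ p * digit B x p \<le> x"
proof -
  have "B ^ p * digit B x p \<le> B ^ p * (x div B ^ p)"
    by (simp add: digit_def)
  also have "\<dots> \<le> x"
    by (metis div_times_less_eq_dividend mult.commute)
  finally show ?thesis .
qed

lemma digit_less: "0 < B \<Longrightarrow> digit B x p < B"
  by (simp add: digit_def)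

lemma antipalindromic_iff_digit:
  assumes "length (digits B x) = L"
  shows "antipalindromic B x \<longleftrightarrow>
           0 < x \<and> (\<forall>p<L. digit B x p = B - 1 - digit B x (L - 1 - p))"
  using assms by (auto simp: antipalindromic_def nth_digits)

lemma palindrome_padded_digits_iff:
  "palindrome (padded_digits B n x) \<longleftrightarrow> (\<forall>i<n. digit B x i = digit B x (n - 1 - i))"
  by (auto simp: palindrome_def padded_digits_def digit_def)

lemma digit_digit_power:
  assumes "0 < B" "i < n"
  shows "digit B (digit (B ^ n) x j) i = digit B x (n * j + i)"
proof -
  have low: "digit B (y mod B ^ n) i = digit B y i" for y
  proof -
    have split: "B ^ n = B ^ i * B ^ (n - i)"
      using assms(2) by (simp flip: power_add)
    have "y mod B ^ n div B ^ i = y div B ^ i mod B ^ (n - i)"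
      unfolding split mod_mult2_eq using assms(1) by simp
    moreover have "B dvd B ^ (n - i)"
      using assms(2) by simp
    ultimately show ?thesis
      by (simp add: digit_def mod_mod_cancel)
  qed
  have "digit B x (n * j + i) = digit B (x div (B ^ n) ^ j) i"
    by (simp add: digit_def power_add power_mult div_mult2_eq)
  then show ?thesis
    using low by (simp add: digit_def[of "B ^ n"])
qed

lemma complement_div_mod:
  fixes B u c :: nat
  assumes "0 < B" "u < B * c"
  shows "(B * c - 1 - u) div B = c - 1 - u div B"
    and "(B * c - 1 - u) mod B = B - 1 - u mod B"
proof -
  have "u div B < c"
    using assms by (simp add: div_less_iff_less_mult mult.commute)
  then have "c = (c - 1 - u div B) + u div B + 1"
    by simp
  then have "B * c = B * (c - 1 - u div B) + B * (u div B) + B"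
    by (metis add_mult_distrib2 mult.right_neutral)
  moreover have "u = B * (u div B) + u mod B" "u mod B < B"
    using assms(1) by simp_all
  ultimately have "B * c - 1 - u = B * (c - 1 - u div B) + (B - 1 - u mod B)"
    by linarith
  moreover have "B - 1 - u mod B < B"
    using assms(1) by simp
  ultimately show "(B * c - 1 - u) div B = c - 1 - u div B"
    and "(B * c - 1 - u) mod B = B - 1 - u mod B"
    by simp_all
qed

lemma digit_complement:
  assumes "0 < B" "x < B ^ n" "i < n"
  shows "digit B (B ^ n - 1 - x) i = B - 1 - digit B x i"
proof -
  have "n - i = Suc (n - i - 1)"
    using assms(3) by simp
  then have "B ^ n = B ^ i * B ^ (n - i)" and "B ^ (n - i) = B * B ^ (n - i - 1)"
    using assms(3) by (simp_all flip: power_add power_Suc)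
  moreover from this have "x div B ^ i < B * B ^ (n - i - 1)"
    using assms(1,2) by (simp add: div_less_iff_less_mult mult.commute)
  ultimately show ?thesis
    using assms(1,2) complement_div_mod[of "B ^ i" x "B ^ (n - i)"]
      complement_div_mod(2)[of B "x div B ^ i" "B ^ (n - i - 1)"]
    by (simp add: digit_def)
qed

lemma reflect_blocks_iff:
  "(\<forall>p<n * Suc k. P p (n * Suc k - 1 - p)) \<longleftrightarrow>
     (\<forall>j\<le>k. \<forall>i<n. P (n * j + i) (n * (k - j) + (n - 1 - i)))"
proof -
  have index: "n * j + i < n * Suc k \<and> n * Suc k - 1 - (n * j + i) = n * (k - j) + (n - 1 - i)"
    if "j \<le> k" "i < n" for j i
  proof -
    have "n * Suc k = n * (k - j) + n * j + n"
      using that(1) by (simp flip: add_mult_distrib2)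
    then show ?thesis
      using that(2) by linarith
  qed
  show ?thesis
  proof
    assume "\<forall>p<n * Suc k. P p (n * Suc k - 1 - p)"
    then show "\<forall>j\<le>k. \<forall>i<n. P (n * j + i) (n * (k - j) + (n - 1 - i))"
      using index by metis
  next
    assume blocks: "\<forall>j\<le>k. \<forall>i<n. P (n * j + i) (n * (k - j) + (n - 1 - i))"
    show "\<forall>p<n * Suc k. P p (n * Suc k - 1 - p)"
    proof (intro allI impI)
      fix p assume p: "p < n * Suc k"
      then have "0 < n"
        by (cases "n = 0") simp_all
      then have "p div n \<le> k" "p mod n < n"
        using p by (simp_all add: less_Suc_eq_le[symmetric] div_less_iff_less_mult mult.commute)
      then show "P p (n * Suc k - 1 - p)"
        using blocks index[of "p div n" "p mod n"] by (metis div_mult_mod_eq mult.commute)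
    qed
  qed
qed

lemma all_le_reflect_iff: "(\<forall>j\<le>k. P (k - j)) \<longleftrightarrow> (\<forall>j\<le>k. P (j::nat))"
proof (intro iffI allI impI)
  fix j assume "\<forall>j\<le>k. P (k - j)" "j \<le> k"
  then show "P j"
    using spec[of _ "k - j"] by (metis diff_diff_cancel diff_le_self)
qed simp

lemma antipalindromic_iff_blocks:
  assumes "2 \<le> B" "0 < n" "length (digits B x) = n * Suc k"
  shows "antipalindromic B x \<longleftrightarrow>
           (\<forall>j\<le>k. \<forall>i<n. digit B (digit (B ^ n) x j) i
                           = B - 1 - digit B (digit (B ^ n) x (k - j)) (n - 1 - i))"
proof -
  have "0 < x"
    using assms(2,3) by (cases "x = 0") simp_all
  then have "antipalindromic B x \<longleftrightarrow>
      (\<forall>p<n * Suc k. digit B x p = B - 1 - digit B x (n * Suc k - 1 - p))"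
    using antipalindromic_iff_digit[OF assms(3)] by simp
  also have "\<dots> \<longleftrightarrow>
      (\<forall>j\<le>k. \<forall>i<n. digit B x (n * j + i) = B - 1 - digit B x (n * (k - j) + (n - 1 - i)))"
    by (rule reflect_blocks_iff)
  finally show ?thesis
    using assms(1) by (auto simp: digit_digit_power)
qed

lemma digit_antipalindromic_power_base:
  assumes "0 < B" "antipalindromic (B ^ n) x" "length (digits (B ^ n) x) = Suc k"
    and "j \<le> k" "i < n"
  shows "digit B (digit (B ^ n) x j) i = B - 1 - digit B (digit (B ^ n) x (k - j)) i"
proof -
  have "digit (B ^ n) x j = B ^ n - 1 - digit (B ^ n) x (k - j)"
    using assms(2,4) antipalindromic_iff_digit[OF assms(3)]
    by (metis diff_diff_cancel diff_Suc_1 le_imp_less_Suc diff_le_self)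
  moreover have "digit (B ^ n) x (k - j) < B ^ n"
    using assms(1) by (simp add: digit_def)
  ultimately show ?thesis
    using digit_complement assms(1,5) by simp
qed

lemma length_digits_power_base:
  assumes "2 \<le> B" "0 < n" "length (digits (B ^ n) x) = Suc k"
    and "B ^ (n - 1) \<le> digit (B ^ n) x k"
  shows "length (digits B x) = n * Suc k"
proof (rule length_digits_eq)
  have "B ^ (n * Suc k - 1) = B ^ (n - 1) * (B ^ n) ^ k"
    using assms(2) by (simp flip: power_add power_mult add: algebra_simps)
  also have "\<dots> \<le> (B ^ n) ^ k * digit (B ^ n) x k"
    using assms(4) by simp
  also have "\<dots> \<le> x"
    by (rule power_mult_digit_le)
  finally show "B ^ (n * Suc k - 1) \<le> x" .
  have "x < (B ^ n) ^ Suc k"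
    using assms(1,2,3) length_digits_le_iff[of "B ^ n" x "Suc k"] self_le_power[of B n]
    by simp
  then show "x < B ^ (n * Suc k)"
    by (simp only: power_mult)
qed (use assms(1,2) in simp_all)

lemma antipalindromic_iff_palindrome_blocks:
  assumes "2 \<le> B" "0 < n"
    and "antipalindromic (B ^ n) x" "length (digits (B ^ n) x) = Suc k"
    and "length (digits B x) = n * Suc k"
  shows "antipalindromic B x \<longleftrightarrow> (\<forall>j\<le>k. palindrome (padded_digits B n (digit (B ^ n) x j)))"
proof -
  let ?v = "\<lambda>j i. digit B (digit (B ^ n) x j) i"
  have reflect_block:
    "?v j i = B - 1 - ?v (k - j) (n - 1 - i) \<longleftrightarrow> ?v (k - j) i = ?v (k - j) (n - 1 - i)"
    if "j \<le> k" "i < n" for j i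
  proof -
    have "?v j i = B - 1 - ?v (k - j) i"
      using digit_antipalindromic_power_base[OF _ assms(3,4) that] assms(1) by simp
    moreover have "?v (k - j) i < B" "?v (k - j) (n - 1 - i) < B"
      using assms(1) by (simp_all add: digit_less)
    ultimately show ?thesis
      by linarith
  qed
  have "antipalindromic B x \<longleftrightarrow> (\<forall>j\<le>k. \<forall>i<n. ?v j i = B - 1 - ?v (k - j) (n - 1 - i))"
    by (rule antipalindromic_iff_blocks[OF assms(1,2,5)])
  also have "\<dots> \<longleftrightarrow> (\<forall>j\<le>k. \<forall>i<n. ?v (k - j) i = ?v (k - j) (n - 1 - i))"
    using reflect_block by auto
  also have "\<dots> \<longleftrightarrow> (\<forall>j\<le>k. palindrome (padded_digits B n (digit (B ^ n) x j)))"
    unfolding palindrome_padded_digits_iff by (rule all_le_reflect_iff)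
  finally show ?thesis .
qed

theorem mainTheorem17:
  fixes b n m k :: nat and u :: "nat \<Rightarrow> nat"
  assumes "b \<ge> 2" and "n \<ge> 1"
    and "antipalindromic (b ^ n) m"
    and "length (digits (b ^ n) m) = Suc k"
    and "\<And>j. j \<le> k \<Longrightarrow> u j = digits (b ^ n) m ! j"
    and "u k \<ge> b ^ (n - 1)"
  shows "antipalindromic b m \<longleftrightarrow>
           (\<forall>j\<le>k. palindrome (padded_digits b n (u j)))"
proof -
  have u: "u j = digit (b ^ n) m j" if "j \<le> k" for j
    using assms(4,5) that by (simp add: nth_digits)
  have "length (digits b m) = n * Suc k"
    using length_digits_power_base[OF assms(1) _ assms(4)] assms(2,6) u[of k] by simp
  then show ?thesis
    using antipalindromic_iff_palindrome_blocks[OF assms(1) _ assms(3,4)] assms(2) u by simp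
qed

end
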